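(* Let $\mathcal F,\mathcal G$ be weighted species with $f_n=[z^n]\mathcal F(z)>0$ and $g_n=[z^n]\mathcal G(z)>0$ for all large $n$. Suppose $\rho:=\rho_{\mathcal G}\in(0,\infty)$ is the radius of convergence of $\mathcal G(z)$, $g_n/g_{n+1}\to\rho$, $\frac1{g_n}\sum_{i+j=n}g_ig_j\to2\mathcal G(\rho)<\infty$, and $f_n/g_n\to\lambda$ for a constant $0<\lambda<\infty$. Let $\mathsf S_n$ be an $n$-sized $\mathcal F\mathcal G$-structure drawn with probability proportional to its weight. Then $$[z^n]\mathcal F(z)\mathcal G(z)\sim\mathcal F(\rho)g_n+\mathcal G(\rho)f_n,$$ and $d_{\mathrm{TV}}(\mathsf S_n,\hat{\mathsf S}_n)\to0$, where $\hat{\mathsf S}_n$ is constructed as follows. Set $p=\mathcal F(\rho)/(\mathcal F(\rho)+\lambda\mathcal G(\rho))$ and flip a coin showing heads with probability $p$. If heads: sample a Boltzmann $\mathcal F$-object $\mathsf F$ with parameter $\rho$; if $|\mathsf F|\le n$ and $g_{n-|\mathsf F|}>0$, let $\hat{\mathsf S}_n$ be the $\mathcal F\mathcal G$-structure with $\mathcal F$-component $\mathsf F$ (placed on a uniformly random $|\mathsf F|$-subset of $\{1,\dots,n\}$) and a $\mathcal G$-component on the remaining $n-|\mathsf F|$ labels drawn with probability proportional to its weight; otherwise set $\hat{\mathsf S}_n=\diamond$ (a placeholder). If tails: symmetrically sample a Boltzmann $\mathcal G$-object $\mathsf G$ with parameter $\rho$, and if $|\mathsf G|\le n$ and $f_{n-|\mathsf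 G|}>0$ complete it with a weight-proportionally drawn $\mathcal F$-component on the remaining $n-|\mathsf G|$ labels; otherwise $\hat{\mathsf S}_n=\diamond$.
   Context: A weighted species $\mathcal F$ assigns to each finite set $U$ a finite set $\mathcal F[U]$ of weighted structures, compatibly with relabelling; $[z^n]\mathcal F(z)$ is $1/n!$ times the total weight of $\mathcal F[\{1,\dots,n\}]$. An $\mathcal F\mathcal G$-structure on $U$ is a pair ($\mathcal F$-structure on $U_1$, $\mathcal G$-structure on $U_2$) with $U=U_1\sqcup U_2$ and product weight. For $\rho>0$ with $\mathcal F(\rho)<\infty$, the Boltzmann distribution with parameter $\rho$ selects $F\in\mathcal F[\{1,\dots,m\}]$ with probability $\omega(F)\rho^m/(m!\,\mathcal F(\rho))$. $d_{\mathrm{TV}}$ denotes total variation distance. *)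

theory Defs
  imports "HOL-Analysis.Analysis" "HOL-Probability.Probability_Mass_Function"
    "HOL-Library.Landau_Symbols"
begin

text \<open>A weighted species, with labels drawn from finite sets of natural numbers.
  structs U = set of structures on the label set U, weight = weight of a structure,
  relabel sigma x = transport of a structure x along a bijection sigma.\<close>

record 'a wspecies =
  structs :: "nat set \<Rightarrow> 'a set"
  weight  :: "'a \<Rightarrow> real"
  relabel :: "(nat \<Rightarrow> nat) \<Rightarrow> 'a \<Rightarrow> 'a"

definition is_wspecies :: "'a wspecies \<Rightarrow> bool" where
  "is_wspecies S \<longleftrightarrow>
     (\<forall>U. finite U \<longrightarrow> finite (structs S U)) \<and>
     (\<forall>U. finite U \<longrightarrow> (\<forall>x\<in>structs S U. weight S x \<ge> 0)) \<and>
     (\<forall>\<sigma> U V x. finite U \<longrightarrow> bij_betw \<sigma> U V \<longrightarrow> x \<in> structs S U \<longrightarrow>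
         relabel S \<sigma> x \<in> structs S V \<and> weight S (relabel S \<sigma> x) = weight S x) \<and>
     (\<forall>\<sigma> U x. finite U \<longrightarrow> x \<in> structs S U \<longrightarrow> (\<forall>i\<in>U. \<sigma> i = i) \<longrightarrow>
         relabel S \<sigma> x = x) \<and>
     (\<forall>\<sigma> \<tau> U V W x. finite U \<longrightarrow> bij_betw \<sigma> U V \<longrightarrow> bij_betw \<tau> V W \<longrightarrow>
         x \<in> structs S U \<longrightarrow> relabel S \<tau> (relabel S \<sigma> x) = relabel S (\<tau> \<circ> \<sigma>) x)"

definition sp_coeff :: "'a wspecies \<Rightarrow> nat \<Rightarrow> real" where
  "sp_coeff S n = (\<Sum>x\<in>structs S {1..n}. weight S x) / fact n"

definition sp_val :: "'a wspecies \<Rightarrow> real \<Rightarrow> real" where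
  "sp_val S r = (\<Sum>n. sp_coeff S n * r ^ n)"

definition prod_structs :: "'a wspecies \<Rightarrow> 'b wspecies \<Rightarrow> nat set \<Rightarrow> (nat set \<times> 'a \<times> 'b) set" where
  "prod_structs F G U =
     {(U1, x, y). U1 \<subseteq> U \<and> x \<in> structs F U1 \<and> y \<in> structs G (U - U1)}"

definition prod_weight :: "'a wspecies \<Rightarrow> 'b wspecies \<Rightarrow> nat set \<times> 'a \<times> 'b \<Rightarrow> real" where
  "prod_weight F G s = weight F (fst (snd s)) * weight G (snd (snd s))"

definition prod_coeff :: "'a wspecies \<Rightarrow> 'b wspecies \<Rightarrow> nat \<Rightarrow> real" where
  "prod_coeff F G n = (\<Sum>s\<in>prod_structs F G {1..n}. prod_weight F G s) / fact n"

definition weighted_pmf :: "'c set \<Rightarrow> ('c \<Rightarrow> real) \<Rightarrow> 'c pmf" where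
  "weighted_pmf A w = embed_pmf (\<lambda>x. if x \<in> A then w x / (\<Sum>y\<in>A. w y) else 0)"

definition boltzmann :: "'a wspecies \<Rightarrow> real \<Rightarrow> (nat \<times> 'a) pmf" where
  "boltzmann S r = embed_pmf (\<lambda>(m, x).
      if x \<in> structs S {1..m} then weight S x * r ^ m / (fact m * sp_val S r) else 0)"

definition place :: "nat set \<Rightarrow> nat \<Rightarrow> nat" where
  "place U = (\<lambda>i. sorted_list_of_set U ! (i - 1))"

definition S_rand :: "'a wspecies \<Rightarrow> 'b wspecies \<Rightarrow> nat \<Rightarrow> (nat set \<times> 'a \<times> 'b) pmf" where
  "S_rand F G n = weighted_pmf (prod_structs F G {1..n}) (prod_weight F G)"

text \<open>The approximation hat S_n; None plays the role of the placeholder.\<close>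
definition S_hat :: "'a wspecies \<Rightarrow> 'b wspecies \<Rightarrow> real \<Rightarrow> real \<Rightarrow> nat \<Rightarrow>
    (nat set \<times> 'a \<times> 'b) option pmf" where
  "S_hat F G \<rho> lam n =
    bind_pmf (bernoulli_pmf (sp_val F \<rho> / (sp_val F \<rho> + lam * sp_val G \<rho>))) (\<lambda>heads.
      if heads then
        bind_pmf (boltzmann F \<rho>) (\<lambda>(m, x).
          if m \<le> n \<and> sp_coeff G (n - m) > 0 then
            bind_pmf (pmf_of_set {U. U \<subseteq> {1..n} \<and> card U = m}) (\<lambda>U.
              bind_pmf (weighted_pmf (structs G ({1..n} - U)) (weight G)) (\<lambda>y.
                return_pmf (Some (U, relabel F (place U) x, y))))
          else return_pmf None)
      else
        bind_pmf (boltzmann G \<rho>) (\<lambda>(m, y).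
          if m \<le> n \<and> sp_coeff F (n - m) > 0 then
            bind_pmf (pmf_of_set {V. V \<subseteq> {1..n} \<and> card V = m}) (\<lambda>V.
              bind_pmf (weighted_pmf (structs F ({1..n} - V)) (weight F)) (\<lambda>x.
                return_pmf (Some ({1..n} - V, x, relabel G (place V) y))))
          else return_pmf None))"

definition tv_dist :: "'c pmf \<Rightarrow> 'c pmf \<Rightarrow> real" where
  "tv_dist p q = (SUP A. \<bar>measure_pmf.prob p A - measure_pmf.prob q A\<bar>)"

end

theory Submission
  imports Defs
begin

text \<open>Subexponentiality of g gives
  g_{n-k}/g_n \<rightarrow> \<rho>^k and makes g * g concentrate on its first and last few terms; as
  f_n ~ \<lambda> g_n, the same holds for f * g, whose n-th term is [z^n] F G. Summing the two ends
  gives [z^n] F G ~ F(\<rho>) g_n + G(\<rho>) f_n.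

  For the total variation bound, an FG-structure with F-part of bounded size m has probability
  proportional to its weight times 1/([z^n] F G) under S_n, and, through the heads branch,
  at least p \<rho>^m/(F(\<rho>) g_{n-m}) times its weight under the approximation; by the asymptotics
  above these agree up to a factor 1 - \<epsilon>. Symmetrically for a G-part of bounded size via
  the tails branch, and the remaining structures carry vanishing mass. A lower bound
  Q \<ge> (1 - \<epsilon>) P on a set of P-mass 1 - \<epsilon> gives d_TV(P, Q) \<le> 2\<epsilon>.\<close>

section \<open>Weighted species\<close>

lemma
  assumes "is_wspecies S" and U: "finite U"
  shows finite_structs: "finite (structs S U)"
    and weight_nonneg: "x \<in> structs S U \<Longrightarrow> 0 \<le> weight S x"
    and relabel_in_structs: "bij_betw \<sigma> U V \<Longrightarrow> x \<in> structs S U \<Longrightarrow> relabel S \<sigma> x \<in> structs S V"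
    and weight_relabel:
      "bij_betw \<sigma> U V \<Longrightarrow> x \<in> structs S U \<Longrightarrow> weight S (relabel S \<sigma> x) = weight S x"
    and relabel_id_on: "x \<in> structs S U \<Longrightarrow> (\<And>i. i \<in> U \<Longrightarrow> \<sigma> i = i) \<Longrightarrow> relabel S \<sigma> x = x"
    and relabel_comp: "bij_betw \<sigma> U V \<Longrightarrow> bij_betw \<tau> V W \<Longrightarrow> x \<in> structs S U \<Longrightarrow>
      relabel S \<tau> (relabel S \<sigma> x) = relabel S (\<tau> \<circ> \<sigma>) x"
  using assms unfolding is_wspecies_def by simp_all (meson | blast)+

lemma relabel_relabel_inverse:
  assumes S: "is_wspecies S" and U: "finite U" and \<sigma>: "bij_betw \<sigma> U V" and \<tau>: "bij_betw \<tau> V U"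
    and inv: "\<And>i. i \<in> U \<Longrightarrow> \<tau> (\<sigma> i) = i" and x: "x \<in> structs S U"
  shows "relabel S \<tau> (relabel S \<sigma> x) = x"
  using relabel_comp[OF S U \<sigma> \<tau> x] relabel_id_on[OF S U x, of "\<tau> \<circ> \<sigma>"] inv by simp

lemma bij_betw_relabel:
  assumes S: "is_wspecies S" and U: "finite U" and \<sigma>: "bij_betw \<sigma> U V"
  shows "bij_betw (relabel S \<sigma>) (structs S U) (structs S V)"
proof (rule bij_betw_byWitness[where f'="relabel S (inv_into U \<sigma>)"])
  have \<tau>: "bij_betw (inv_into U \<sigma>) V U" using \<sigma> by (rule bij_betw_inv_into)
  have V: "finite V" using bij_betw_finite \<sigma> U by blast
  show "\<forall>x\<in>structs S U. relabel S (inv_into U \<sigma>) (relabel S \<sigma> x) = x"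
    using \<sigma> by (auto intro!: relabel_relabel_inverse[OF S U \<sigma> \<tau>] simp: bij_betw_def)
  show "\<forall>y\<in>structs S V. relabel S \<sigma> (relabel S (inv_into U \<sigma>) y) = y"
  proof
    fix y assume "y \<in> structs S V"
    then show "relabel S \<sigma> (relabel S (inv_into U \<sigma>) y) = y"
      using \<sigma> by (intro relabel_relabel_inverse[OF S V \<tau> \<sigma>]) (auto simp: bij_betw_def f_inv_into_f)
  qed
  show "relabel S \<sigma> ` structs S U \<subseteq> structs S V"
    using relabel_in_structs[OF S U \<sigma>] by blast
  show "relabel S (inv_into U \<sigma>) ` structs S V \<subseteq> structs S U"
    using relabel_in_structs[OF S V \<tau>] by blast
qed

lemma sum_weight_structs_bij:
  assumes S: "is_wspecies S" and U: "finite U" and \<sigma>: "bij_betw \<sigma> U V"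
  shows "sum (weight S) (structs S V) = sum (weight S) (structs S U)"
  using sum.reindex_bij_betw[OF bij_betw_relabel[OF S U \<sigma>], of "weight S"]
  by (simp add: weight_relabel[OF S U \<sigma>])

lemma bij_betw_place: "finite U \<Longrightarrow> bij_betw (place U) {1..card U} U"
proof -
  assume U: "finite U"
  have "bij_betw (\<lambda>i. sorted_list_of_set U ! i) {..<card U} U"
    using U by (metis bij_betw_nth distinct_sorted_list_of_set length_sorted_list_of_set
      lessThan_atLeast0 set_sorted_list_of_set)
  moreover have "bij_betw (\<lambda>i. i - 1) {1..card U} {..<card U}"
    by (rule bij_betw_byWitness[where f'=Suc]) auto
  ultimately show ?thesis
    unfolding place_def using bij_betw_trans by (fastforce simp: comp_def)
qed

lemma sum_weight_structs:
  "is_wspecies S \<Longrightarrow> finite U \<Longrightarrow> sum (weight S) (structs S U) = fact (card U) * sp_coeff S (card U)"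
  using sum_weight_structs_bij[of S "{1..card U}" "place U" U] bij_betw_place[of U]
  unfolding sp_coeff_def by simp

lemma sp_coeff_nonneg: "is_wspecies S \<Longrightarrow> 0 \<le> sp_coeff S n"
  unfolding sp_coeff_def by (auto intro!: sum_nonneg divide_nonneg_nonneg intro: weight_nonneg)

section \<open>Products of species\<close>

definition cauchy_conv :: "(nat \<Rightarrow> real) \<Rightarrow> (nat \<Rightarrow> real) \<Rightarrow> nat \<Rightarrow> real" where
  "cauchy_conv a b n = (\<Sum>k\<le>n. a k * b (n - k))"

lemma sum_Pow_card:
  assumes A: "finite A"
  shows "(\<Sum>B\<in>Pow A. h (card B)) = (\<Sum>k\<le>card A. of_nat (card A choose k) * h k)"
proof -
  have "(\<Sum>B\<in>Pow A. h (card B)) = (\<Sum>k\<le>card A. \<Sum>B\<in>{B \<in> Pow A. card B = k}. h (card B))"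
    using A by (intro sum.group[symmetric]) (auto intro: card_mono)
  also have "\<dots> = (\<Sum>k\<le>card A. of_nat (card A choose k) * h k)"
    using n_subsets[OF A] by (intro sum.cong) auto
  finally show ?thesis .
qed

lemma prod_structs_Sigma:
  "prod_structs F G U = Sigma (Pow U) (\<lambda>U1. structs F U1 \<times> structs G (U - U1))"
  unfolding prod_structs_def by auto

lemma finite_prod_structs:
  assumes "is_wspecies F" "is_wspecies G" "finite U"
  shows "finite (prod_structs F G U)"
  unfolding prod_structs_Sigma using assms
  by (intro finite_SigmaI finite_cartesian_product finite_structs) (auto intro: finite_subset)

lemma prod_weight_nonneg:
  assumes "is_wspecies F" "is_wspecies G" "finite U" "s \<in> prod_structs F G U"
  shows "0 \<le> prod_weight F G s"
proof -
  obtain U1 x y where "s = (U1, x, y)" "U1 \<subseteq> U" "x \<in> structs F U1" "y \<in> structs G (U - U1)"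
    using assms(4) unfolding prod_structs_def by auto
  then show ?thesis
    using assms(1-3) unfolding prod_weight_def
    by (auto intro!: mult_nonneg_nonneg intro: weight_nonneg finite_subset)
qed

text \<open>The binomial coefficient counting the splittings of the labels cancels against the
  factorials of the exponential generating series.\<close>

lemma sum_prod_weight_card:
  assumes F: "is_wspecies F" and G: "is_wspecies G"
  shows "(\<Sum>s\<in>prod_structs F G {1..n}. if Q (card (fst s)) then prod_weight F G s else 0)
     = fact n * (\<Sum>k\<le>n. if Q k then sp_coeff F k * sp_coeff G (n - k) else 0)"
proof -
  let ?c = "\<lambda>k. if Q k then fact k * sp_coeff F k * (fact (n - k) * sp_coeff G (n - k)) else 0"
  have fin: "finite (structs F U)" "finite (structs G U)" if "U \<subseteq> {1..n}" for U
    using that finite_structs[OF F] finite_structs[OF G] finite_subset by blast+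
  have "(\<Sum>s\<in>prod_structs F G {1..n}. if Q (card (fst s)) then prod_weight F G s else 0)
     = (\<Sum>U1\<in>Pow {1..n}. \<Sum>p\<in>structs F U1 \<times> structs G ({1..n} - U1).
          if Q (card U1) then weight F (fst p) * weight G (snd p) else 0)"
    unfolding prod_structs_Sigma prod_weight_def
    by (subst sum.Sigma) (auto intro!: fin finite_cartesian_product simp: case_prod_beta)
  also have "\<dots> = (\<Sum>U1\<in>Pow {1..n}. if Q (card U1) then
       sum (weight F) (structs F U1) * sum (weight G) (structs G ({1..n} - U1)) else 0)"
    by (intro sum.cong) (auto simp: sum_product sum.cartesian_product case_prod_beta)
  also have "\<dots> = (\<Sum>U1\<in>Pow {1..n}. ?c (card U1))"
  proof (intro sum.cong refl)
    fix U1 assume "U1 \<in> Pow {1..n}"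
    then have U1: "U1 \<subseteq> {1..n}" and "finite U1" by (auto intro: finite_subset)
    moreover have "card ({1..n} - U1) = n - card U1"
      using card_Diff_subset[OF \<open>finite U1\<close> U1] by simp
    ultimately show "(if Q (card U1) then
       sum (weight F) (structs F U1) * sum (weight G) (structs G ({1..n} - U1)) else 0) = ?c (card U1)"
      by (simp add: sum_weight_structs[OF F] sum_weight_structs[OF G])
  qed
  also have "\<dots> = (\<Sum>k\<le>n. of_nat (n choose k) * ?c k)"
    using sum_Pow_card[of "{1..n}" ?c] by simp
  also have "\<dots> = (\<Sum>k\<le>n. fact n * (if Q k then sp_coeff F k * sp_coeff G (n - k) else 0))"
  proof (intro sum.cong refl)
    fix k assume "k \<in> {..n}"
    then have "fact k * fact (n - k) * real (n choose k) = fact n"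
      by (metis atMost_iff binomial_fact_lemma of_nat_fact of_nat_mult)
    then show "of_nat (n choose k) * ?c k
      = fact n * (if Q k then sp_coeff F k * sp_coeff G (n - k) else 0)"
      by (auto simp: algebra_simps)
  qed
  finally show ?thesis by (simp add: sum_distrib_left)
qed

lemma prod_coeff_eq_cauchy_conv:
  "is_wspecies F \<Longrightarrow> is_wspecies G \<Longrightarrow> prod_coeff F G n = cauchy_conv (sp_coeff F) (sp_coeff G) n"
  using sum_prod_weight_card[of F G "\<lambda>_. True" n] unfolding prod_coeff_def cauchy_conv_def by simp

section \<open>Discrete distributions\<close>

lemma pmf_bind_ge:
  assumes "c \<le> pmf (f y) z"
  shows "pmf N y * c \<le> pmf (bind_pmf N f) z"
proof -
  have "ennreal (pmf N y * c) \<le> (\<integral>\<^sup>+x. ennreal (pmf N y * pmf (f y) z) * indicator {y} x \<partial>count_space UNIV)"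
    using assms by (simp add: nn_integral_cmult_indicator mult_left_mono)
  also have "\<dots> \<le> (\<integral>\<^sup>+x. ennreal (pmf N x) * ennreal (pmf (f x) z) \<partial>count_space UNIV)"
    by (intro nn_integral_mono) (auto split: split_indicator simp: ennreal_mult)
  also have "\<dots> = ennreal (pmf (bind_pmf N f) z)"
    by (simp add: ennreal_pmf_bind nn_integral_measure_pmf)
  finally show ?thesis by (simp add: ennreal_le_iff)
qed

lemma pmf_weighted_pmf:
  assumes A: "finite A" and w: "\<And>x. x \<in> A \<Longrightarrow> 0 \<le> w x" and pos: "0 < sum w A"
  shows "pmf (weighted_pmf A w) x = (if x \<in> A then w x / sum w A else 0)"
  unfolding weighted_pmf_def
proof (rule pmf_embed_pmf)
  show "0 \<le> (if x \<in> A then w x / sum w A else 0)" for x using w pos by auto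
  have "(\<integral>\<^sup>+x. ennreal (if x \<in> A then w x / sum w A else 0) \<partial>count_space UNIV)
      = (\<Sum>x\<in>A. ennreal (w x / sum w A))"
    by (subst nn_integral_count_space'[OF A]) auto
  also have "\<dots> = 1"
    using w pos by (subst sum_ennreal) (auto simp: sum_divide_distrib[symmetric])
  finally show "(\<integral>\<^sup>+x. ennreal (if x \<in> A then w x / sum w A else 0) \<partial>count_space UNIV) = 1" .
qed

lemma pmf_boltzmann:
  assumes S: "is_wspecies S" and r: "0 \<le> r" and summable: "summable (\<lambda>n. sp_coeff S n * r ^ n)"
    and pos: "0 < sp_val S r"
  shows "pmf (boltzmann S r) (m, x) =
    (if x \<in> structs S {1..m} then weight S x * r ^ m / (fact m * sp_val S r) else 0)"
proof -
  define f where "f = (\<lambda>(m::nat, x).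
    if x \<in> structs S {1..m} then weight S x * r ^ m / (fact m * sp_val S r) else 0)"
  have f_nonneg: "0 \<le> f z" for z
    unfolding f_def using r pos
    by (auto split: prod.split intro!: divide_nonneg_pos mult_nonneg_nonneg
        weight_nonneg[OF S finite_atLeastAtMost])
  have layer: "(\<integral>\<^sup>+z. ennreal (if fst z = k then f z else 0) \<partial>count_space UNIV)
      = ennreal (sp_coeff S k * r ^ k / sp_val S r)" for k
  proof -
    have "(\<integral>\<^sup>+z. ennreal (if fst z = k then f z else 0) \<partial>count_space UNIV)
        = (\<Sum>z\<in>Pair k ` structs S {1..k}. ennreal (f z))"
      by (subst nn_integral_count_space'[of "Pair k ` structs S {1..k}"])
         (auto simp: finite_structs[OF S] f_def intro!: sum.cong)
    also have "\<dots> = ennreal (\<Sum>x\<in>structs S {1..k}. weight S x * r ^ k / (fact k * sp_val S r))"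
      using f_nonneg by (subst sum_ennreal) (auto simp: sum.reindex inj_on_def f_def)
    also have "\<dots> = ennreal (sp_coeff S k * r ^ k / sp_val S r)"
      unfolding sp_coeff_def
      by (simp add: sum_divide_distrib[symmetric] sum_distrib_right[symmetric] field_simps)
    finally show ?thesis .
  qed
  have "(\<integral>\<^sup>+z. ennreal (f z) \<partial>count_space UNIV)
      = (\<integral>\<^sup>+z. (\<Sum>k. ennreal (if fst z = k then f z else 0)) \<partial>count_space UNIV)"
    by (intro nn_integral_cong) (subst suminf_finite[of "{fst _}"], auto)
  also have "\<dots> = (\<Sum>k. ennreal (sp_coeff S k * r ^ k / sp_val S r))"
    by (simp add: nn_integral_suminf layer)
  also have "\<dots> = ennreal (\<Sum>k. sp_coeff S k * r ^ k / sp_val S r)"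
    using sp_coeff_nonneg[OF S] r pos
    by (intro suminf_ennreal2) (auto intro!: summable_divide summable)
  also have "\<dots> = 1"
    using pos summable unfolding sp_val_def by (simp add: suminf_divide)
  finally have "pmf (embed_pmf f) (m, x) = f (m, x)"
    using f_nonneg by (intro pmf_embed_pmf) auto
  then show ?thesis unfolding boltzmann_def f_def by simp
qed

lemma tv_dist_nonneg: "0 \<le> tv_dist P Q"
  unfolding tv_dist_def
proof (rule cSUP_upper2[where x="{}"])
  show "bdd_above (range (\<lambda>A. \<bar>measure_pmf.prob P A - measure_pmf.prob Q A\<bar>))"
  proof (rule bdd_aboveI[where M=1])
    fix y assume "y \<in> range (\<lambda>A. \<bar>measure_pmf.prob P A - measure_pmf.prob Q A\<bar>)"
    then obtain A where "y = \<bar>measure_pmf.prob P A - measure_pmf.prob Q A\<bar>" by auto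
    then show "y \<le> 1" using measure_pmf.prob_le_1[of P A] measure_pmf.prob_le_1[of Q A]
      measure_nonneg[of P A] measure_nonneg[of Q A] by linarith
  qed
qed auto

lemma prob_ge_of_mass_dominated:
  fixes P Q :: "'c pmf"
  assumes fin: "finite D" and "0 \<le> \<epsilon>" and mass: "1 - \<epsilon> \<le> (\<Sum>x\<in>D. pmf P x)"
    and dom: "\<And>x. x \<in> D \<Longrightarrow> (1 - \<epsilon>) * pmf P x \<le> pmf Q x"
  shows "measure_pmf.prob P A - 2 * \<epsilon> \<le> measure_pmf.prob Q A"
proof -
  have fin': "finite (A \<inter> D)" using fin by simp
  let ?s = "\<Sum>x\<in>A \<inter> D. pmf P x"
  have "measure_pmf.prob P (- D) \<le> \<epsilon>"
    using measure_pmf.prob_compl[of D P] measure_measure_pmf_finite[OF fin, of P] mass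
    by (simp add: Compl_eq_Diff_UNIV)
  moreover have "measure_pmf.prob P A \<le> measure_pmf.prob P (A \<inter> D) + measure_pmf.prob P (- D)"
    by (rule order.trans[OF measure_pmf.finite_measure_mono measure_subadditive]) auto
  ultimately have "measure_pmf.prob P A \<le> ?s + \<epsilon>"
    using measure_measure_pmf_finite[OF fin', of P] by simp
  moreover have "?s \<le> 1"
    using measure_measure_pmf_finite[OF fin', of P] measure_pmf.prob_le_1[of P "A \<inter> D"] by simp
  moreover have "(1 - \<epsilon>) * ?s \<le> measure_pmf.prob Q A"
  proof -
    have "(1 - \<epsilon>) * ?s \<le> (\<Sum>x\<in>A \<inter> D. pmf Q x)"
      unfolding sum_distrib_left by (rule sum_mono) (use dom in auto)
    also have "\<dots> \<le> measure_pmf.prob Q A"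
      using measure_measure_pmf_finite[OF fin', of Q] measure_pmf.finite_measure_mono[of "A \<inter> D" A Q]
      by simp
    finally show ?thesis .
  qed
  moreover have "?s - \<epsilon> \<le> (1 - \<epsilon>) * ?s"
    using \<open>?s \<le> 1\<close> \<open>0 \<le> \<epsilon>\<close> by (simp add: algebra_simps mult_left_le)
  ultimately show ?thesis by linarith
qed

lemma tv_dist_le:
  fixes P Q :: "'c pmf"
  assumes "finite D" "0 \<le> \<epsilon>" "1 - \<epsilon> \<le> (\<Sum>x\<in>D. pmf P x)"
    and "\<And>x. x \<in> D \<Longrightarrow> (1 - \<epsilon>) * pmf P x \<le> pmf Q x"
  shows "tv_dist P Q \<le> 2 * \<epsilon>"
  unfolding tv_dist_def
proof (rule cSUP_least)
  fix A :: "'c set"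
  show "\<bar>measure_pmf.prob P A - measure_pmf.prob Q A\<bar> \<le> 2 * \<epsilon>"
    using prob_ge_of_mass_dominated[OF assms, of A] prob_ge_of_mass_dominated[OF assms, of "- A"]
      measure_pmf.prob_compl[of A P] measure_pmf.prob_compl[of A Q]
    by (simp add: Compl_eq_Diff_UNIV)
qed simp

section \<open>Convolutions of subexponential sequences\<close>

definition conv_middle :: "(nat \<Rightarrow> real) \<Rightarrow> (nat \<Rightarrow> real) \<Rightarrow> nat \<Rightarrow> nat \<Rightarrow> real" where
  "conv_middle a b K n = (\<Sum>k\<le>n. if K < k \<and> k < n - K then a k * b (n - k) else 0)"

lemma cauchy_conv_split:
  assumes "2 * K < n"
  shows "cauchy_conv a b n
    = (\<Sum>k\<le>K. a k * b (n - k)) + (\<Sum>k\<le>K. a (n - k) * b k) + conv_middle a b K n"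
proof -
  let ?\<phi> = "\<lambda>k. a k * b (n - k)"
  have "cauchy_conv a b n = (\<Sum>k\<le>n. (if k \<le> K then ?\<phi> k else 0) + (if n - K \<le> k then ?\<phi> k else 0)
      + (if K < k \<and> k < n - K then ?\<phi> k else 0))"
    unfolding cauchy_conv_def by (rule sum.cong) (use assms in auto)
  also have "\<dots> = (\<Sum>k\<le>n. if k \<le> K then ?\<phi> k else 0) + (\<Sum>k\<le>n. if n - K \<le> k then ?\<phi> k else 0)
      + conv_middle a b K n"
    unfolding conv_middle_def by (simp add: sum.distrib)
  also have "(\<Sum>k\<le>n. if k \<le> K then ?\<phi> k else 0) = (\<Sum>k\<le>K. ?\<phi> k)"
    using assms by (intro sum.mono_neutral_cong_right) auto
  also have "(\<Sum>k\<le>n. if n - K \<le> k then ?\<phi> k else 0) = sum ?\<phi> {n - K..n}"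
    by (intro sum.mono_neutral_cong_right) auto
  also have "\<dots> = (\<Sum>k\<le>K. a (n - k) * b k)"
    by (rule sum.reindex_bij_witness[of _ "\<lambda>k. n - k" "\<lambda>k. n - k"]) (use assms in auto)
  finally show ?thesis .
qed

lemma cauchy_conv_diff_conv_middle:
  "cauchy_conv a b n - conv_middle a b K n
    = (\<Sum>k\<le>n. if k \<le> K \<or> n - K \<le> k then a k * b (n - k) else 0)"
  unfolding cauchy_conv_def conv_middle_def by (subst sum_subtractf[symmetric]) (rule sum.cong, auto)

lemma conv_middle_nonneg: "(\<And>k. 0 \<le> a k) \<Longrightarrow> (\<And>k. 0 \<le> b k) \<Longrightarrow> 0 \<le> conv_middle a b K n"
  unfolding conv_middle_def by (auto intro!: sum_nonneg)

lemma conv_middle_mono: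
  assumes "\<And>k. K < k \<Longrightarrow> a k \<le> c * a' k" and "\<And>k. 0 \<le> b k"
  shows "conv_middle a b K n \<le> c * conv_middle a' b K n"
  unfolding conv_middle_def sum_distrib_left
proof (intro sum_mono)
  fix k
  show "(if K < k \<and> k < n - K then a k * b (n - k) else 0)
    \<le> c * (if K < k \<and> k < n - K then a' k * b (n - k) else 0)"
    using mult_right_mono[OF assms] by (auto simp: mult.assoc)
qed

lemma eventually_sequentially_diff:
  "eventually P sequentially \<Longrightarrow> eventually (\<lambda>n. P (n - m)) sequentially"
  unfolding eventually_sequentially by (metis add_le_imp_le_diff)

lemma eventually_le_of_ratio_tendsto_1:
  fixes a b :: "nat \<Rightarrow> real"
  assumes "(\<lambda>n. a n / b n) \<longlonglongrightarrow> 1" and "eventually (\<lambda>n. 0 < b n) sequentially" and "0 < \<epsilon>"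
  shows "eventually (\<lambda>n. (1 - \<epsilon>) * b n \<le> a n) sequentially"
proof -
  have "eventually (\<lambda>n. 1 - \<epsilon> < a n / b n) sequentially"
    by (rule order_tendstoD(1)[OF assms(1)]) (use assms(3) in simp)
  then show ?thesis using assms(2) by eventually_elim (simp add: less_divide_eq)
qed

locale subexponential_pair =
  fixes f g :: "nat \<Rightarrow> real" and \<rho> lam :: real
  assumes f_nonneg: "\<And>n. 0 \<le> f n" and g_nonneg: "\<And>n. 0 \<le> g n"
    and eventually_f_pos: "eventually (\<lambda>n. 0 < f n) sequentially"
    and eventually_g_pos: "eventually (\<lambda>n. 0 < g n) sequentially"
    and rho_pos: "0 < \<rho>"
    and g_ratio: "(\<lambda>n. g n / g (Suc n)) \<longlonglongrightarrow> \<rho>"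
    and summable_g: "summable (\<lambda>n. g n * \<rho> ^ n)"
    and g_conv: "(\<lambda>n. cauchy_conv g g n / g n) \<longlonglongrightarrow> 2 * (\<Sum>n. g n * \<rho> ^ n)"
    and lam_pos: "0 < lam"
    and f_over_g: "(\<lambda>n. f n / g n) \<longlonglongrightarrow> lam"
begin

definition "F_val = (\<Sum>n. f n * \<rho> ^ n)"
definition "G_val = (\<Sum>n. g n * \<rho> ^ n)"
definition "conv_limit = F_val + lam * G_val"

lemma g_shift_ratio: "(\<lambda>n. g (n - m) / g n) \<longlonglongrightarrow> \<rho> ^ m"
proof -
  have shifted: "(\<lambda>n. g n / g (n + m)) \<longlonglongrightarrow> \<rho> ^ m"
  proof (induction m)
    case 0
    have "eventually (\<lambda>n. 1 = g n / g (n + 0)) sequentially"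
      using eventually_g_pos by eventually_elim simp
    from Lim_transform_eventually[OF tendsto_const this] show ?case by simp
  next
    case (Suc m)
    have "(\<lambda>n. g (n + m) / g (Suc (n + m))) \<longlonglongrightarrow> \<rho>"
      using LIMSEQ_ignore_initial_segment[OF g_ratio, of m] by simp
    with Suc have "(\<lambda>n. g n / g (n + m) * (g (n + m) / g (Suc (n + m)))) \<longlonglongrightarrow> \<rho> ^ m * \<rho>"
      by (rule tendsto_mult)
    moreover have "eventually (\<lambda>n. 0 < g (n + m)) sequentially"
      using eventually_g_pos by (rule eventually_sequentially_seg[THEN iffD2])
    then have "eventually (\<lambda>n. g n / g (n + m) * (g (n + m) / g (Suc (n + m)))
        = g n / g (n + Suc m)) sequentially"
      by eventually_elim simp
    ultimately show ?case by (simp add: Lim_transform_eventually mult.commute)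
  qed
  show ?thesis by (rule LIMSEQ_offset[where k=m]) (use shifted in simp)
qed

lemma f_shift_ratio: "(\<lambda>n. f (n - m) / g n) \<longlonglongrightarrow> lam * \<rho> ^ m"
proof -
  have "(\<lambda>n. f (n - m) / g (n - m)) \<longlonglongrightarrow> lam"
    by (rule LIMSEQ_offset[where k=m]) (use f_over_g in simp)
  then have "(\<lambda>n. f (n - m) / g (n - m) * (g (n - m) / g n)) \<longlonglongrightarrow> lam * \<rho> ^ m"
    by (intro tendsto_mult g_shift_ratio)
  moreover have "eventually (\<lambda>n. f (n - m) / g (n - m) * (g (n - m) / g n) = f (n - m) / g n) sequentially"
    using eventually_sequentially_diff[where m=m, OF eventually_g_pos] by eventually_elim simp
  ultimately show ?thesis by (rule Lim_transform_eventually)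
qed

lemma eventually_f_le_g: "eventually (\<lambda>k. f k \<le> (lam + 1) * g k) sequentially"
proof -
  have "eventually (\<lambda>k. f k / g k < lam + 1) sequentially"
    by (rule order_tendstoD(2)[OF f_over_g]) simp
  then show ?thesis using eventually_g_pos by eventually_elim (simp add: divide_less_eq)
qed

lemma summable_f: "summable (\<lambda>n. f n * \<rho> ^ n)"
proof (rule summable_comparison_test_ev)
  show "summable (\<lambda>n. (lam + 1) * (g n * \<rho> ^ n))" by (intro summable_mult summable_g)
  show "eventually (\<lambda>n. norm (f n * \<rho> ^ n) \<le> (lam + 1) * (g n * \<rho> ^ n)) sequentially"
    using eventually_f_le_g by eventually_elim (use f_nonneg rho_pos in \<open>simp add: mult_right_mono\<close>)
qed

lemma F_val_pos: "0 < F_val"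
proof -
  obtain i where "0 < f i" using eventually_f_pos by (auto simp: eventually_sequentially)
  then show ?thesis
    unfolding F_val_def using summable_f f_nonneg rho_pos by (intro suminf_pos2[of _ i]) auto
qed

lemma G_val_pos: "0 < G_val"
proof -
  obtain i where "0 < g i" using eventually_g_pos by (auto simp: eventually_sequentially)
  then show ?thesis
    unfolding G_val_def using summable_g g_nonneg rho_pos by (intro suminf_pos2[of _ i]) auto
qed

lemma conv_limit_pos: "0 < conv_limit"
  unfolding conv_limit_def using F_val_pos G_val_pos lam_pos by (simp add: add_pos_pos)

lemma head_conv_tendsto: "(\<lambda>n. (\<Sum>k\<le>K. a k * g (n - k)) / g n) \<longlonglongrightarrow> (\<Sum>k\<le>K. a k * \<rho> ^ k)"
proof -
  have "(\<lambda>n. \<Sum>k\<le>K. a k * (g (n - k) / g n)) \<longlonglongrightarrow> (\<Sum>k\<le>K. a k * \<rho> ^ k)"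
    by (intro tendsto_sum tendsto_mult_left g_shift_ratio)
  then show ?thesis by (simp add: sum_divide_distrib)
qed

lemma tail_conv_tendsto:
  "(\<lambda>n. (\<Sum>k\<le>K. f (n - k) * g k) / g n) \<longlonglongrightarrow> lam * (\<Sum>k\<le>K. g k * \<rho> ^ k)"
proof -
  have "(\<lambda>n. \<Sum>k\<le>K. g k * (f (n - k) / g n)) \<longlonglongrightarrow> (\<Sum>k\<le>K. g k * (lam * \<rho> ^ k))"
    by (intro tendsto_sum tendsto_mult_left f_shift_ratio)
  then show ?thesis by (simp add: sum_divide_distrib sum_distrib_left algebra_simps)
qed

lemma conv_middle_gg_tendsto:
  "(\<lambda>n. conv_middle g g K n / g n) \<longlonglongrightarrow> 2 * G_val - 2 * (\<Sum>k\<le>K. g k * \<rho> ^ k)"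
proof -
  have "(\<lambda>n. cauchy_conv g g n / g n - 2 * ((\<Sum>k\<le>K. g k * g (n - k)) / g n))
      \<longlonglongrightarrow> 2 * G_val - 2 * (\<Sum>k\<le>K. g k * \<rho> ^ k)"
    unfolding G_val_def by (intro tendsto_diff tendsto_mult_left g_conv head_conv_tendsto)
  moreover have "eventually (\<lambda>n. cauchy_conv g g n / g n - 2 * ((\<Sum>k\<le>K. g k * g (n - k)) / g n)
      = conv_middle g g K n / g n) sequentially"
  proof (rule eventually_gt_at_top[THEN eventually_mono])
    fix n assume "2 * K < n"
    moreover have "(\<Sum>k\<le>K. g (n - k) * g k) = (\<Sum>k\<le>K. g k * g (n - k))"
      by (simp add: mult.commute)
    ultimately show "cauchy_conv g g n / g n - 2 * ((\<Sum>k\<le>K. g k * g (n - k)) / g n)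
      = conv_middle g g K n / g n"
      by (simp add: cauchy_conv_split diff_divide_distrib add_divide_distrib)
  qed
  ultimately show ?thesis by (rule Lim_transform_eventually)
qed

text \<open>This is where subexponentiality enters: the convolution of g with itself has no mass
  left in the middle once the first and last K terms are removed, and f is dominated by g.\<close>

lemma eventually_conv_middle_small:
  assumes "0 < e"
  shows "eventually (\<lambda>K. eventually (\<lambda>n. conv_middle f g K n \<le> e * g n) sequentially) sequentially"
proof -
  obtain N where N: "\<And>k. N \<le> k \<Longrightarrow> f k \<le> (lam + 1) * g k"
    using eventually_f_le_g by (auto simp: eventually_sequentially)
  have "(\<lambda>K. 2 * G_val - 2 * (\<Sum>k\<le>K. g k * \<rho> ^ k)) \<longlonglongrightarrow> 2 * G_val - 2 * G_val"
    unfolding G_val_def by (intro tendsto_intros summable_LIMSEQ' summable_g)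
  then have "eventually (\<lambda>K. 2 * G_val - 2 * (\<Sum>k\<le>K. g k * \<rho> ^ k) < e / (lam + 1)) sequentially"
    using assms lam_pos by (intro order_tendstoD(2)) auto
  moreover have "eventually (\<lambda>n. conv_middle f g K n \<le> e * g n) sequentially"
    if "2 * G_val - 2 * (\<Sum>k\<le>K. g k * \<rho> ^ k) < e / (lam + 1)" and "N \<le> K" for K
    using order_tendstoD(2)[OF conv_middle_gg_tendsto that(1)] eventually_g_pos
  proof eventually_elim
    case (elim n)
    have "conv_middle f g K n \<le> (lam + 1) * conv_middle g g K n"
      using that(2) by (intro conv_middle_mono N g_nonneg) auto
    also have "\<dots> \<le> e * g n"
      using elim lam_pos by (simp add: divide_less_eq field_simps)
    finally show ?case .
  qed
  ultimately show ?thesis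
    by (auto intro: eventually_mono[OF eventually_conj[OF _ eventually_ge_at_top]])
qed

lemma cauchy_conv_over_g_tendsto: "(\<lambda>n. cauchy_conv f g n / g n) \<longlonglongrightarrow> conv_limit"
proof (rule tendstoI)
  fix e :: real assume e: "0 < e"
  define P where "P K = (\<Sum>k\<le>K. f k * \<rho> ^ k) + lam * (\<Sum>k\<le>K. g k * \<rho> ^ k)" for K
  have "P \<longlonglongrightarrow> conv_limit"
    unfolding P_def conv_limit_def F_val_def G_val_def
    by (intro tendsto_intros summable_LIMSEQ' summable_f summable_g)
  then have "eventually (\<lambda>K. dist (P K) conv_limit < e / 2) sequentially"
    using e by (intro tendstoD) auto
  then have "eventually (\<lambda>K. dist (P K) conv_limit < e / 2
      \<and> eventually (\<lambda>n. conv_middle f g K n \<le> e / 4 * g n) sequentially) sequentially"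
    using eventually_conv_middle_small[of "e / 4"] e by (intro eventually_conj) auto
  then obtain K where K: "dist (P K) conv_limit < e / 2"
    and mid: "eventually (\<lambda>n. conv_middle f g K n \<le> e / 4 * g n) sequentially"
    using eventually_happens'[OF sequentially_bot] by blast
  have "(\<lambda>n. (\<Sum>k\<le>K. f k * g (n - k)) / g n + (\<Sum>k\<le>K. f (n - k) * g k) / g n) \<longlonglongrightarrow> P K"
    unfolding P_def by (intro tendsto_add head_conv_tendsto tail_conv_tendsto)
  then have "eventually (\<lambda>n. dist ((\<Sum>k\<le>K. f k * g (n - k)) / g n
      + (\<Sum>k\<le>K. f (n - k) * g k) / g n) (P K) < e / 4) sequentially"
    using e by (intro tendstoD) auto
  then show "eventually (\<lambda>n. dist (cauchy_conv f g n / g n) conv_limit < e) sequentially"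
    using mid eventually_g_pos eventually_gt_at_top[of "2 * K"]
  proof eventually_elim
    case (elim n)
    have "cauchy_conv f g n / g n = (\<Sum>k\<le>K. f k * g (n - k)) / g n
        + (\<Sum>k\<le>K. f (n - k) * g k) / g n + conv_middle f g K n / g n"
      using elim(4) by (simp add: cauchy_conv_split add_divide_distrib)
    moreover have "0 \<le> conv_middle f g K n / g n" "conv_middle f g K n / g n \<le> e / 4"
      using elim(2,3) conv_middle_nonneg[OF f_nonneg g_nonneg] by (simp_all add: divide_le_eq)
    ultimately show ?case
      using elim(1) K unfolding dist_real_def abs_less_iff by (intro conjI; linarith)
  qed
qed

lemma cauchy_conv_asymp_equiv:
  "cauchy_conv f g \<sim>[sequentially] (\<lambda>n. F_val * g n + G_val * f n)"
proof (rule asymp_equivI')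
  have L: "F_val + G_val * lam = conv_limit" unfolding conv_limit_def by simp
  have "(\<lambda>n. (cauchy_conv f g n / g n) / (F_val + G_val * (f n / g n)))
      \<longlonglongrightarrow> conv_limit / (F_val + G_val * lam)"
    using conv_limit_pos L by (intro tendsto_intros cauchy_conv_over_g_tendsto f_over_g) auto
  moreover have "eventually (\<lambda>n. (cauchy_conv f g n / g n) / (F_val + G_val * (f n / g n))
      = cauchy_conv f g n / (F_val * g n + G_val * f n)) sequentially"
    using eventually_g_pos by eventually_elim (simp add: field_simps)
  ultimately show "(\<lambda>n. cauchy_conv f g n / (F_val * g n + G_val * f n)) \<longlonglongrightarrow> 1"
    using conv_limit_pos L by (auto intro: Lim_transform_eventually)
qed

lemma eventually_cauchy_conv_pos: "eventually (\<lambda>n. 0 < cauchy_conv f g n) sequentially"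
proof -
  have "eventually (\<lambda>n. 0 < cauchy_conv f g n / g n) sequentially"
    using cauchy_conv_over_g_tendsto conv_limit_pos by (rule order_tendstoD)
  then show ?thesis using eventually_g_pos by eventually_elim (simp add: zero_less_divide_iff)
qed

lemma ex_eventually_conv_middle_le:
  assumes "0 < \<epsilon>"
  shows "\<exists>K. eventually (\<lambda>n. conv_middle f g K n \<le> \<epsilon> * cauchy_conv f g n) sequentially"
proof -
  have "eventually (\<lambda>K. eventually (\<lambda>n. conv_middle f g K n \<le> \<epsilon> * conv_limit / 2 * g n)
      sequentially) sequentially"
    using assms conv_limit_pos by (intro eventually_conv_middle_small) simp
  then obtain K where K: "eventually (\<lambda>n. conv_middle f g K n \<le> \<epsilon> * conv_limit / 2 * g n) sequentially"
    using eventually_happens'[OF sequentially_bot] by blast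
  have "eventually (\<lambda>n. conv_limit / 2 < cauchy_conv f g n / g n) sequentially"
    using cauchy_conv_over_g_tendsto conv_limit_pos by (intro order_tendstoD) auto
  with K eventually_g_pos have "eventually (\<lambda>n. conv_middle f g K n \<le> \<epsilon> * cauchy_conv f g n) sequentially"
  proof eventually_elim
    case (elim n)
    have "\<epsilon> * conv_limit / 2 * g n \<le> \<epsilon> * cauchy_conv f g n"
      using elim(2,3) assms by (simp add: field_simps)
    then show ?case using elim(1) by linarith
  qed
  then show ?thesis ..
qed

text \<open>For a = g, c = \<rho>^m (resp. a = f, c = lam \<rho>^m) this compares the weight of the
  FG-structures whose F-part (resp. G-part) has size m with the probability the approximating
  model assigns to them.\<close>

lemma eventually_shift_le_cauchy_conv:
  assumes shift: "(\<lambda>n. a (n - m) / g n) \<longlonglongrightarrow> c" and "0 < c" and "0 < \<epsilon>"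
  shows "eventually (\<lambda>n. 0 < a (n - m) \<and>
    (1 - \<epsilon>) * (conv_limit * a (n - m)) \<le> c * cauchy_conv f g n) sequentially"
proof -
  have "eventually (\<lambda>n. 0 < a (n - m) / g n) sequentially"
    using shift \<open>0 < c\<close> by (rule order_tendstoD)
  then have a_pos: "eventually (\<lambda>n. 0 < a (n - m)) sequentially"
    using eventually_g_pos by eventually_elim (simp add: zero_less_divide_iff)
  have "(\<lambda>n. c * (cauchy_conv f g n / g n) / (conv_limit * (a (n - m) / g n)))
      \<longlonglongrightarrow> c * conv_limit / (conv_limit * c)"
    using conv_limit_pos \<open>0 < c\<close> by (intro tendsto_intros shift cauchy_conv_over_g_tendsto) auto
  moreover have "eventually (\<lambda>n. c * (cauchy_conv f g n / g n) / (conv_limit * (a (n - m) / g n))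
      = c * cauchy_conv f g n / (conv_limit * a (n - m))) sequentially"
    using eventually_g_pos by eventually_elim simp
  ultimately have "(\<lambda>n. c * cauchy_conv f g n / (conv_limit * a (n - m))) \<longlonglongrightarrow> 1"
    using conv_limit_pos \<open>0 < c\<close> by (auto intro: Lim_transform_eventually)
  moreover have "eventually (\<lambda>n. 0 < conv_limit * a (n - m)) sequentially"
    using a_pos by eventually_elim (simp add: conv_limit_pos)
  ultimately have "eventually (\<lambda>n. (1 - \<epsilon>) * (conv_limit * a (n - m)) \<le> c * cauchy_conv f g n)
      sequentially"
    using \<open>0 < \<epsilon>\<close> by (rule eventually_le_of_ratio_tendsto_1)
  with a_pos show ?thesis by (rule eventually_conj)
qed

lemma eventually_small_parts_le_cauchy_conv:
  assumes "0 < \<epsilon>"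
  shows "eventually (\<lambda>n. \<forall>m\<in>{..K}.
    (0 < g (n - m) \<and> (1 - \<epsilon>) * (conv_limit * g (n - m)) \<le> \<rho> ^ m * cauchy_conv f g n) \<and>
    (0 < f (n - m) \<and> (1 - \<epsilon>) * (conv_limit * f (n - m)) \<le> lam * \<rho> ^ m * cauchy_conv f g n))
    sequentially"
  using assms rho_pos lam_pos
  by (intro eventually_ball_finite ballI eventually_conj eventually_shift_le_cauchy_conv
      g_shift_ratio f_shift_ratio) auto

end

section \<open>The approximating model\<close>

definition completion_pmf ::
    "'a wspecies \<Rightarrow> 'b wspecies \<Rightarrow> real \<Rightarrow> nat \<Rightarrow> (nat set \<Rightarrow> 'a \<Rightarrow> 'b \<Rightarrow> 'c) \<Rightarrow> 'c option pmf" where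
  "completion_pmf A B \<rho> n \<phi> =
    bind_pmf (boltzmann A \<rho>) (\<lambda>(m, x).
      if m \<le> n \<and> sp_coeff B (n - m) > 0 then
        bind_pmf (pmf_of_set {U. U \<subseteq> {1..n} \<and> card U = m}) (\<lambda>U.
          bind_pmf (weighted_pmf (structs B ({1..n} - U)) (weight B)) (\<lambda>y.
            return_pmf (Some (\<phi> U (relabel A (place U) x) y))))
      else return_pmf None)"

lemma S_hat_eq_completion_pmf:
  "S_hat F G \<rho> lam n =
    bind_pmf (bernoulli_pmf (sp_val F \<rho> / (sp_val F \<rho> + lam * sp_val G \<rho>))) (\<lambda>heads.
      if heads then completion_pmf F G \<rho> n (\<lambda>U x y. (U, x, y))
      else completion_pmf G F \<rho> n (\<lambda>V y x. ({1..n} - V, x, y)))"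
  unfolding S_hat_def completion_pmf_def ..

lemma pmf_completion_pmf_ge:
  assumes A: "is_wspecies A" and B: "is_wspecies B" and "0 \<le> \<rho>"
    and "summable (\<lambda>k. sp_coeff A k * \<rho> ^ k)" and "0 < sp_val A \<rho>"
    and U: "U \<subseteq> {1..n}" and x: "x \<in> structs A U" and y: "y \<in> structs B ({1..n} - U)"
    and pos: "0 < sp_coeff B (n - card U)"
  shows "weight A x * weight B y * \<rho> ^ card U / (fact n * (sp_val A \<rho> * sp_coeff B (n - card U)))
    \<le> pmf (completion_pmf A B \<rho> n \<phi>) (Some (\<phi> U x y))"
proof -
  define m where "m = card U"
  have fin: "finite U" using U finite_subset by blast
  have "m \<le> n" unfolding m_def using card_mono[OF _ U] by simp
  obtain x0 where x0: "x0 \<in> structs A {1..m}" and x_eq: "x = relabel A (place U) x0"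
    using bij_betw_relabel[OF A _ bij_betw_place[OF fin]] x unfolding m_def bij_betw_def by auto
  have weight_x0: "weight A x0 = weight A x"
    unfolding x_eq m_def using weight_relabel[OF A _ bij_betw_place[OF fin]] x0 m_def by simp
  have card_rest: "card ({1..n} - U) = n - m" unfolding m_def using U fin by (simp add: card_Diff_subset)
  define SS where "SS = {U. U \<subseteq> {1..n} \<and> card U = m}"
  have pmf_SS: "pmf (pmf_of_set SS) U = 1 / real (n choose m)"
    using U n_subsets[of "{1..n}" m] unfolding SS_def m_def by (subst pmf_of_set) auto
  have pmf_W: "pmf (weighted_pmf (structs B ({1..n} - U)) (weight B)) y
      = weight B y / (fact (n - m) * sp_coeff B (n - m))"
    using y pos card_rest sum_weight_structs[OF B, of "{1..n} - U"]
    by (subst pmf_weighted_pmf) (auto simp: finite_structs[OF B] m_def intro: weight_nonneg[OF B])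
  have "pmf (weighted_pmf (structs B ({1..n} - U)) (weight B)) y * 1
      \<le> pmf (bind_pmf (weighted_pmf (structs B ({1..n} - U)) (weight B)) (\<lambda>y.
            return_pmf (Some (\<phi> U (relabel A (place U) x0) y)))) (Some (\<phi> U x y))"
    by (rule pmf_bind_ge) (simp add: x_eq)
  then have "pmf (pmf_of_set SS) U * (pmf (weighted_pmf (structs B ({1..n} - U)) (weight B)) y * 1)
      \<le> pmf (bind_pmf (pmf_of_set SS) (\<lambda>U.
          bind_pmf (weighted_pmf (structs B ({1..n} - U)) (weight B)) (\<lambda>y.
            return_pmf (Some (\<phi> U (relabel A (place U) x0) y))))) (Some (\<phi> U x y))"
    by (rule pmf_bind_ge)
  then have "pmf (boltzmann A \<rho>) (m, x0)
        * (pmf (pmf_of_set SS) U * (pmf (weighted_pmf (structs B ({1..n} - U)) (weight B)) y * 1))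
      \<le> pmf (completion_pmf A B \<rho> n \<phi>) (Some (\<phi> U x y))"
    unfolding completion_pmf_def using \<open>m \<le> n\<close> pos by (intro pmf_bind_ge) (simp add: SS_def m_def)
  moreover have "fact m * fact (n - m) * real (n choose m) = (fact n :: real)"
    using binomial_fact_lemma[OF \<open>m \<le> n\<close>] by (metis of_nat_fact of_nat_mult)
  then have "pmf (boltzmann A \<rho>) (m, x0)
        * (pmf (pmf_of_set SS) U * (pmf (weighted_pmf (structs B ({1..n} - U)) (weight B)) y * 1))
      = weight A x * weight B y * \<rho> ^ m / (fact n * (sp_val A \<rho> * sp_coeff B (n - m)))"
    using pmf_boltzmann[OF A assms(3-5), of m x0] x0 weight_x0 pmf_SS pmf_W
    by (simp add: field_simps)
  ultimately show ?thesis unfolding m_def by simp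
qed

lemma mult_fraction_le_fraction:
  fixes t w N c d a :: real
  assumes "0 \<le> w" "0 < N" "0 < c" "0 < d" "t * d \<le> a * c"
  shows "t * (w / (N * c)) \<le> w * a / (N * d)"
proof -
  have "t * (w / (N * c)) = w / (N * c * d) * (t * d)" using assms(3,4) by (simp add: field_simps)
  also have "\<dots> \<le> w / (N * c * d) * (a * c)" using assms by (intro mult_left_mono) auto
  also have "\<dots> = w * a / (N * d)" using assms(3) by (simp add: field_simps)
  finally show ?thesis .
qed

lemma times_divide_cancel_factor:
  fixes p :: real
  assumes "p \<noteq> 0"
  shows "a * p / L * (w / (N * (p * g))) = a * w / (N * (L * g))"
proof -
  have "a * p / L * (w / (N * (p * g))) = (p * (a * w)) / (p * (N * (L * g)))"
    by (simp add: ac_simps)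
  also have "\<dots> = a * w / (N * (L * g))" using assms by (rule nonzero_mult_divide_mult_cancel_left)
  finally show ?thesis .
qed

context
  fixes F :: "'a wspecies" and G :: "'b wspecies" and \<rho> lam :: real
  assumes F_species: "is_wspecies F" and G_species: "is_wspecies G" and rho_pos: "0 < \<rho>"
    and summable_F: "summable (\<lambda>k. sp_coeff F k * \<rho> ^ k)"
    and summable_G: "summable (\<lambda>k. sp_coeff G k * \<rho> ^ k)"
    and F_val_pos: "0 < sp_val F \<rho>" and G_val_pos: "0 < sp_val G \<rho>" and lam_pos: "0 < lam"
begin

lemma sp_val_weighted_sum_pos: "0 < sp_val F \<rho> + lam * sp_val G \<rho>"
  using F_val_pos G_val_pos lam_pos by (simp add: add_pos_pos)

lemma bernoulli_heads_prob:
  "pmf (bernoulli_pmf (sp_val F \<rho> / (sp_val F \<rho> + lam * sp_val G \<rho>))) True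
    = sp_val F \<rho> / (sp_val F \<rho> + lam * sp_val G \<rho>)"
  using F_val_pos mult_pos_pos[OF lam_pos G_val_pos] by simp

lemma bernoulli_tails_prob:
  "pmf (bernoulli_pmf (sp_val F \<rho> / (sp_val F \<rho> + lam * sp_val G \<rho>))) False
    = lam * sp_val G \<rho> / (sp_val F \<rho> + lam * sp_val G \<rho>)"
  using F_val_pos G_val_pos lam_pos sp_val_weighted_sum_pos by (simp add: field_simps)

lemma pmf_S_hat_ge_F_part:
  assumes s: "(U, x, y) \<in> prod_structs F G {1..n}" and pos: "0 < sp_coeff G (n - card U)"
  shows "prod_weight F G (U, x, y) * \<rho> ^ card U
      / (fact n * ((sp_val F \<rho> + lam * sp_val G \<rho>) * sp_coeff G (n - card U)))
    \<le> pmf (S_hat F G \<rho> lam n) (Some (U, x, y))"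
proof -
  have "weight F x * weight G y * \<rho> ^ card U / (fact n * (sp_val F \<rho> * sp_coeff G (n - card U)))
    \<le> pmf (completion_pmf F G \<rho> n (\<lambda>U x y. (U, x, y))) (Some (U, x, y))"
    using s pos rho_pos unfolding prod_structs_def
    by (intro pmf_completion_pmf_ge[OF F_species G_species _ summable_F F_val_pos]) auto
  then have "pmf (bernoulli_pmf (sp_val F \<rho> / (sp_val F \<rho> + lam * sp_val G \<rho>))) True
      * (weight F x * weight G y * \<rho> ^ card U / (fact n * (sp_val F \<rho> * sp_coeff G (n - card U))))
    \<le> pmf (S_hat F G \<rho> lam n) (Some (U, x, y))"
    unfolding S_hat_eq_completion_pmf by (intro pmf_bind_ge) simp
  then show ?thesis
    unfolding bernoulli_heads_prob
    using times_divide_cancel_factor[of "sp_val F \<rho>" 1] F_val_pos by (simp add: prod_weight_def ac_simps)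
qed

lemma pmf_S_hat_ge_G_part:
  assumes s: "(U, x, y) \<in> prod_structs F G {1..n}" and pos: "0 < sp_coeff F (card U)"
  shows "prod_weight F G (U, x, y) * (lam * \<rho> ^ (n - card U))
      / (fact n * ((sp_val F \<rho> + lam * sp_val G \<rho>) * sp_coeff F (card U)))
    \<le> pmf (S_hat F G \<rho> lam n) (Some (U, x, y))"
proof -
  define V where "V = {1..n} - U"
  have U: "U \<subseteq> {1..n}" and x: "x \<in> structs F U" and y: "y \<in> structs G V"
    using s unfolding prod_structs_def V_def by auto
  have "finite U" using U finite_subset by blast
  have V: "V \<subseteq> {1..n}" "{1..n} - V = U" "card V = n - card U" "n - card V = card U"
    using U card_mono[OF _ U] card_Diff_subset[OF \<open>finite U\<close> U] unfolding V_def by auto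
  have "weight G y * weight F x * \<rho> ^ card V / (fact n * (sp_val G \<rho> * sp_coeff F (n - card V)))
    \<le> pmf (completion_pmf G F \<rho> n (\<lambda>V y x. ({1..n} - V, x, y))) (Some ({1..n} - V, x, y))"
    using V x y pos rho_pos
    by (intro pmf_completion_pmf_ge[OF G_species F_species _ summable_G G_val_pos]) auto
  then have "pmf (bernoulli_pmf (sp_val F \<rho> / (sp_val F \<rho> + lam * sp_val G \<rho>))) False
      * (weight G y * weight F x * \<rho> ^ card V / (fact n * (sp_val G \<rho> * sp_coeff F (n - card V))))
    \<le> pmf (S_hat F G \<rho> lam n) (Some (U, x, y))"
    unfolding S_hat_eq_completion_pmf \<open>{1..n} - V = U\<close>[symmetric] by (intro pmf_bind_ge) simp
  then show ?thesis
    unfolding bernoulli_tails_prob times_divide_cancel_factor[OF G_val_pos[THEN less_imp_neq, symmetric]]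
    using V by (simp add: prod_weight_def ac_simps)
qed

text \<open>The structures with a small F-part are produced by the heads branch, those with a small
  G-part by the tails branch, and all others together carry only the mass of the middle terms
  of the convolution.\<close>

lemma tv_dist_S_hat_le:
  assumes conv_pos: "0 < cauchy_conv (sp_coeff F) (sp_coeff G) n" and "0 \<le> \<epsilon>"
    and middle: "conv_middle (sp_coeff F) (sp_coeff G) K n \<le> \<epsilon> * cauchy_conv (sp_coeff F) (sp_coeff G) n"
    and F_small: "\<And>m. m \<le> K \<Longrightarrow> 0 < sp_coeff G (n - m) \<and>
      (1 - \<epsilon>) * ((sp_val F \<rho> + lam * sp_val G \<rho>) * sp_coeff G (n - m))
        \<le> \<rho> ^ m * cauchy_conv (sp_coeff F) (sp_coeff G) n"
    and G_small: "\<And>m. m \<le> K \<Longrightarrow> 0 < sp_coeff F (n - m) \<and>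
      (1 - \<epsilon>) * ((sp_val F \<rho> + lam * sp_val G \<rho>) * sp_coeff F (n - m))
        \<le> lam * \<rho> ^ m * cauchy_conv (sp_coeff F) (sp_coeff G) n"
  shows "tv_dist (map_pmf Some (S_rand F G n)) (S_hat F G \<rho> lam n) \<le> 2 * \<epsilon>"
proof -
  let ?H = "cauchy_conv (sp_coeff F) (sp_coeff G) n"
  define PS where "PS = prod_structs F G {1..n}"
  define good where "good = {s \<in> PS. card (fst s) \<le> K \<or> n - K \<le> card (fst s)}"
  have fin: "finite PS"
    unfolding PS_def using F_species G_species by (intro finite_prod_structs) auto
  have w_nonneg: "0 \<le> prod_weight F G s" if "s \<in> PS" for s
    using that F_species G_species unfolding PS_def by (intro prod_weight_nonneg) auto
  have total: "(\<Sum>s\<in>PS. prod_weight F G s) = fact n * ?H"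
    using sum_prod_weight_card[OF F_species G_species, of "\<lambda>_. True" n]
    unfolding PS_def cauchy_conv_def by simp
  have pmf_S_rand: "pmf (map_pmf Some (S_rand F G n)) (Some s)
      = (if s \<in> PS then prod_weight F G s / (fact n * ?H) else 0)" for s
    unfolding pmf_map_inj'[OF inj_Some] S_rand_def PS_def[symmetric]
    using pmf_weighted_pmf[where w="prod_weight F G", OF fin w_nonneg] total conv_pos by simp
  show ?thesis
  proof (rule tv_dist_le[where D="Some ` good"])
    show "finite (Some ` good)" using fin unfolding good_def by simp
    show "0 \<le> \<epsilon>" by fact
    have "(\<Sum>z\<in>Some ` good. pmf (map_pmf Some (S_rand F G n)) z)
        = (\<Sum>s\<in>PS. if card (fst s) \<le> K \<or> n - K \<le> card (fst s) then prod_weight F G s else 0)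
          / (fact n * ?H)"
      using fin unfolding good_def
      by (simp add: sum.reindex pmf_S_rand sum_divide_distrib sum.inter_filter) (intro sum.cong; simp)
    also have "\<dots> = (?H - conv_middle (sp_coeff F) (sp_coeff G) K n) / ?H"
      using sum_prod_weight_card[OF F_species G_species, of "\<lambda>k. k \<le> K \<or> n - K \<le> k" n]
      unfolding PS_def cauchy_conv_diff_conv_middle by simp
    finally show "1 - \<epsilon> \<le> (\<Sum>z\<in>Some ` good. pmf (map_pmf Some (S_rand F G n)) z)"
      using middle conv_pos by (simp add: diff_divide_distrib divide_le_eq)
  next
    fix z assume "z \<in> Some ` good"
    then obtain U x y where z: "z = Some (U, x, y)" and s: "(U, x, y) \<in> PS"
      and sizes: "card U \<le> K \<or> n - K \<le> card U"
      unfolding good_def by auto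
    have pmf_z: "pmf (map_pmf Some (S_rand F G n)) z = prod_weight F G (U, x, y) / (fact n * ?H)"
      using s z pmf_S_rand by simp
    show "(1 - \<epsilon>) * pmf (map_pmf Some (S_rand F G n)) z \<le> pmf (S_hat F G \<rho> lam n) z"
    proof (cases "card U \<le> K")
      case True
      with F_small have "(1 - \<epsilon>) * (prod_weight F G (U, x, y) / (fact n * ?H))
          \<le> prod_weight F G (U, x, y) * \<rho> ^ card U
            / (fact n * ((sp_val F \<rho> + lam * sp_val G \<rho>) * sp_coeff G (n - card U)))"
        using conv_pos sp_val_weighted_sum_pos w_nonneg[OF s]
        by (intro mult_fraction_le_fraction) auto
      also have "\<dots> \<le> pmf (S_hat F G \<rho> lam n) z"
        unfolding z using s True F_small unfolding PS_def by (intro pmf_S_hat_ge_F_part) auto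
      finally show ?thesis unfolding pmf_z .
    next
      case False
      have "card U \<le> n" using s card_mono[of "{1..n}" U] unfolding PS_def prod_structs_def by auto
      then have m: "n - card U \<le> K" "n - (n - card U) = card U" using sizes False by auto
      with G_small[of "n - card U"] have "(1 - \<epsilon>) * (prod_weight F G (U, x, y) / (fact n * ?H))
          \<le> prod_weight F G (U, x, y) * (lam * \<rho> ^ (n - card U))
            / (fact n * ((sp_val F \<rho> + lam * sp_val G \<rho>) * sp_coeff F (card U)))"
        using conv_pos sp_val_weighted_sum_pos w_nonneg[OF s]
        by (intro mult_fraction_le_fraction) auto
      also have "\<dots> \<le> pmf (S_hat F G \<rho> lam n) z"
        unfolding z using s m G_small[of "n - card U"] unfolding PS_def
        by (intro pmf_S_hat_ge_G_part) auto
      finally show ?thesis unfolding pmf_z .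
    qed
  qed
qed

end

theorem proposition5:
  fixes F :: "'a wspecies" and G :: "'b wspecies" and \<rho> lam :: real
  assumes "is_wspecies F" and "is_wspecies G"
    and "eventually (\<lambda>n. sp_coeff F n > 0) sequentially"
    and "eventually (\<lambda>n. sp_coeff G n > 0) sequentially"
    and "0 < \<rho>" and "conv_radius (sp_coeff G) = ereal \<rho>"
    and "(\<lambda>n. sp_coeff G n / sp_coeff G (Suc n)) \<longlonglongrightarrow> \<rho>"
    and "summable (\<lambda>n. sp_coeff G n * \<rho> ^ n)"
    and "(\<lambda>n. (\<Sum>i\<le>n. sp_coeff G i * sp_coeff G (n - i)) / sp_coeff G n)
           \<longlonglongrightarrow> 2 * sp_val G \<rho>"
    and "0 < lam" and "(\<lambda>n. sp_coeff F n / sp_coeff G n) \<longlonglongrightarrow> lam"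
  shows "((\<lambda>n. prod_coeff F G n) \<sim>[sequentially]
           (\<lambda>n. sp_val F \<rho> * sp_coeff G n + sp_val G \<rho> * sp_coeff F n)) \<and>
         ((\<lambda>n. tv_dist (map_pmf Some (S_rand F G n)) (S_hat F G \<rho> lam n)) \<longlonglongrightarrow> 0)"
proof -
  interpret subexponential_pair "sp_coeff F" "sp_coeff G" \<rho> lam
    using assms by unfold_locales (auto simp: sp_coeff_nonneg cauchy_conv_def sp_val_def)
  have vals: "sp_val F \<rho> = F_val" "sp_val G \<rho> = G_val" "F_val + lam * G_val = conv_limit"
    unfolding sp_val_def F_val_def G_val_def conv_limit_def by simp_all
  have "(\<lambda>n. tv_dist (map_pmf Some (S_rand F G n)) (S_hat F G \<rho> lam n)) \<longlonglongrightarrow> 0"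
  proof (rule tendstoI)
    fix e :: real assume "0 < e"
    then have "0 < e / 4" by simp
    then obtain K where "eventually (\<lambda>n. conv_middle (sp_coeff F) (sp_coeff G) K n
        \<le> e / 4 * cauchy_conv (sp_coeff F) (sp_coeff G) n) sequentially"
      using ex_eventually_conv_middle_le by blast
    then show "eventually (\<lambda>n. dist (tv_dist (map_pmf Some (S_rand F G n)) (S_hat F G \<rho> lam n)) 0 < e)
        sequentially"
      using eventually_small_parts_le_cauchy_conv[OF \<open>0 < e / 4\<close>, of K] eventually_cauchy_conv_pos
    proof eventually_elim
      case (elim n)
      have "tv_dist (map_pmf Some (S_rand F G n)) (S_hat F G \<rho> lam n) \<le> 2 * (e / 4)"
        using assms(1,2,5,8) summable_f F_val_pos G_val_pos lam_pos elim \<open>0 < e\<close>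
        by (intro tv_dist_S_hat_le[where K=K]) (auto simp: vals)
      then show ?case
        using tv_dist_nonneg[of "map_pmf Some (S_rand F G n)" "S_hat F G \<rho> lam n"] \<open>0 < e\<close>
        by (simp add: dist_real_def)
    qed
  qed
  then show ?thesis
    using cauchy_conv_asymp_equiv prod_coeff_eq_cauchy_conv[OF assms(1,2)] vals by simp
qed

end
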